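(* Fix $M<\infty$ and $\kappa\in(0,1/2)$, and assume unconfoundedness. Let $\mathcal{G}$ be a class of treatment allocations and let $\mathcal{G}_1,\mathcal{G}_2,\dots$ be a (finite or countable) sequence of classes with $\mathcal{G}_k\subseteq\mathcal{G}$ of finite VC dimension $V_k$. Suppose the penalties $C_n(k)$ satisfy the following tail condition: there exist positive constants $c_0,c_1$ such that for every $n$, every $k$ and every $\epsilon>0$, $$\sup_{P\in\mathcal{P}(M,\kappa)}P^n\big(W_n(\hat G_{n,k})-W(\hat G_{n,k})-C_n(k)>\epsilon\big)\le c_1e^{-2c_0n\epsilon^2}.$$ Then there exist positive constants $\Delta$ and $c_0$ such that for every $n$ and every $P\in\mathcal{P}(M,\kappa)$, the PWM rule $\hat G_n$ satisfies $$E_{P^n}\big[W^*_{\mathcal{G}}-W(\hat G_n)\big]\le\inf_k\Big[E_{P^n}[C_n(k)]+\big(W^*_{\mathcal{G}}-W^*_{\mathcal{G}_k}\big)+\sqrt{\tfrac{k}{n}}\Big]+\sqrt{\frac{\log(\Delta e)}{2c_0n}}.$$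
   Context: Potential outcomes $Y(0),Y(1)\in\mathbb{R}$, treatment $D\in\{0,1\}$, covariates $X\in\mathcal{X}\subseteq\mathbb{R}^{d_x}$; observed outcome $Y=Y(1)D+Y(0)(1-D)$; $P$ is the distribution of $(Y,D,X)$ and the data $S_n=\{(Y_i,D_i,X_i)\}_{i=1}^n$ are i.i.d. from $P$. Unconfoundedness: $(Y(1),Y(0))\perp D\mid X$. Propensity score $e(x)=E_P[D\mid X=x]$ (known to the planner). $\mathcal{P}(M,\kappa)$ is the set of distributions for which the support of $Y$ is contained in $[-M/2,M/2]$ and $e(x)\in[\kappa,1-\kappa]$ for all $x$. A treatment allocation is a measurable set $G\subseteq\mathcal{X}$ with welfare $W(G)=E_P\big[\big(\frac{YD}{e(X)}-\frac{Y(1-D)}{1-e(X)}\big)\mathbf{1}\{X\in G\}\big]$; for a class $\mathcal{A}$ of allocations, $W^*_{\mathcal{A}}=\sup_{G\in\mathcal{A}}W(G)$. Let $\tau_i=\frac{Y_iD_i}{e(X_i)}-\frac{Y_i(1-D_i)}{1-e(X_i)}$ and $W_n(G)=\frac1n\sum_{i=1}^n\tau_i\mathbf{1}\{X_i\in G\}$. For each $k$, $\hat G_{n,k}\in\arg\max_{G\in\mathcal{G}_k}W_n(G)$. For each $k$, $C_n(k)$ is a (data-dependent) penalty; define $R_{n,k}(G)=W_n(G)-C_n(k)-\sqrt{k/n}$ and the penalized welfare maximization (PWM) rule $\hat G_n=\hat G_{n,\hat k}$ with $\hat k\in\arg\max_kR_{n,k}(\hat G_{n,k})$. Maximizers are assumed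 to exist and measurability issues are ignored. *)

theory Defs
  imports "HOL-Probability.Probability"
begin

type_synonym 'd obs = "real \<times> bool \<times> (real ^ 'd)"

definition obs_space :: "'d::finite obs measure" where
  "obs_space = borel \<Otimes>\<^sub>M count_space UNIV \<Otimes>\<^sub>M borel"

definition obsY :: "'d::finite obs \<Rightarrow> real" where "obsY w = fst w"
definition obsD :: "'d::finite obs \<Rightarrow> bool" where "obsD w = fst (snd w)"
definition obsX :: "'d::finite obs \<Rightarrow> real ^ 'd" where "obsX w = snd (snd w)"

definition sample_space :: "nat \<Rightarrow> (nat \<Rightarrow> 'd::finite obs) measure" where
  "sample_space n = PiM {..<n} (\<lambda>_. obs_space)"

definition sample_law :: "'d::finite obs measure \<Rightarrow> nat \<Rightarrow> (nat \<Rightarrow> 'd obs) measure" where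
  "sample_law P n = PiM {..<n} (\<lambda>_. P)"

text \<open>e is (a version of) the propensity score E_P[D | X = x]: a measurable function of x
  with E_P[D 1{X \<in> A}] = E_P[e(X) 1{X \<in> A}] for every Borel set A.\<close>

definition propensity :: "'d::finite obs measure \<Rightarrow> (real ^ 'd \<Rightarrow> real) \<Rightarrow> bool" where
  "propensity P e \<longleftrightarrow> e \<in> borel_measurable borel \<and>
     (\<forall>A \<in> sets borel.
        (\<integral>w. of_bool (obsD w) * indicator A (obsX w) \<partial>P)
      = (\<integral>w. e (obsX w) * indicator A (obsX w) \<partial>P))"

text \<open>(P, e) with P in the class P(M, kappa) and e its propensity score (the version known
  to the planner, with kappa \<le> e(x) \<le> 1 - kappa for all x).\<close>

definition in_PMk :: "real \<Rightarrow> real \<Rightarrow> 'd::finite obs measure \<Rightarrow> (real ^ 'd \<Rightarrow> real) \<Rightarrow> bool" where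
  "in_PMk M \<kappa> P e \<longleftrightarrow> prob_space P \<and> sets P = sets obs_space \<and>
     (AE w in P. obsY w \<in> {-M/2 .. M/2}) \<and>
     propensity P e \<and> (\<forall>x. \<kappa> \<le> e x \<and> e x \<le> 1 - \<kappa>)"

definition tau :: "(real ^ 'd \<Rightarrow> real) \<Rightarrow> 'd::finite obs \<Rightarrow> real" where
  "tau e w = obsY w * of_bool (obsD w) / e (obsX w)
           - obsY w * (1 - of_bool (obsD w)) / (1 - e (obsX w))"

definition welfare :: "'d::finite obs measure \<Rightarrow> (real ^ 'd \<Rightarrow> real) \<Rightarrow> (real ^ 'd) set \<Rightarrow> real" where
  "welfare P e G = (\<integral>w. tau e w * indicator G (obsX w) \<partial>P)"

definition Wstar :: "'d::finite obs measure \<Rightarrow> (real ^ 'd \<Rightarrow> real) \<Rightarrow> (real ^ 'd) set set \<Rightarrow> real" where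
  "Wstar P e \<A> = (SUP G \<in> \<A>. welfare P e G)"

definition emp_welfare :: "(real ^ 'd \<Rightarrow> real) \<Rightarrow> nat \<Rightarrow> (nat \<Rightarrow> 'd::finite obs) \<Rightarrow> (real ^ 'd) set \<Rightarrow> real" where
  "emp_welfare e n S G = (1 / real n) * (\<Sum>i<n. tau e (S i) * indicator G (obsX (S i)))"

definition shatters :: "'a set set \<Rightarrow> 'a set \<Rightarrow> bool" where
  "shatters \<A> F \<longleftrightarrow> (\<lambda>A. A \<inter> F) ` \<A> = Pow F"

definition vc_dim :: "'a set set \<Rightarrow> enat" where
  "vc_dim \<A> = Sup {enat (card F) | F. finite F \<and> shatters \<A> F}"

end

theory Submission
  imports Defs
begin

text \<open>
  Write \<open>R_n(k)\<close> for the penalized excess \<open>W_n(\<hat>G_k) - W(\<hat>G_k) - C_n(k) - \<surd>(k/n)\<close>. For every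
  \<open>G \<in> \<G>_k\<close>, maximality of \<open>\<hat>G_k\<close> and of \<open>\<hat>k\<close> gives pointwise
  \<open>W^* - W(\<hat>G) \<le> W^* - W_n(G) + C_n(k) + \<surd>(k/n) + max 0 (R_n(\<hat>k))\<close>,
  and \<open>W_n(G)\<close> is unbiased for \<open>W(G)\<close>. It remains to bound \<open>E max 0 (R_n(\<hat>k))\<close> uniformly in
  the random index: summing the layer probabilities \<open>P(R_n(j) > m/\<surd>n)\<close> over all \<open>j\<close> and
  \<open>m\<close>, the tail condition at \<open>\<epsilon> = (m + \<surd>j)/\<surd>n\<close> makes them at most \<open>c\<^sub>1 q\<^sup>j q\<^sup>m\<close> with
  \<open>q = exp(-2c\<^sub>0)\<close>, so the expectation is \<open>O(1/\<surd>n)\<close>; the penalty \<open>\<surd>(k/n)\<close> is what makes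
  the union bound over \<open>k\<close> summable. Taking the supremum over \<open>G \<in> \<G>_k\<close> finishes the proof.
\<close>

lemma ennreal_pos_part_le_suminf_layers:
  fixes \<delta> y :: real
  assumes "0 < \<delta>"
  shows "ennreal (max 0 y) \<le> (\<Sum>m. ennreal (\<delta> * of_bool (real m * \<delta> < y)))"
proof -
  define N where "N = nat \<lceil>y / \<delta>\<rceil>"
  have "real m * \<delta> < y" if "m < N" for m
  proof -
    from that have "int m < \<lceil>y / \<delta>\<rceil>" by (simp add: N_def)
    then show ?thesis using assms by (simp add: less_ceiling_iff field_simps)
  qed
  then have "(\<Sum>m<N. ennreal (\<delta> * of_bool (real m * \<delta> < y))) = ennreal (real N * \<delta>)"
    using assms by (simp add: ennreal_of_nat_eq_real_of_nat ennreal_mult')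
  moreover have "y / \<delta> \<le> real N"
    unfolding N_def by linarith
  then have "ennreal (max 0 y) \<le> ennreal (real N * \<delta>)"
    using assms by (intro ennreal_leI) (simp add: field_simps)
  ultimately show ?thesis
    using sum_le_suminf[of "\<lambda>m. ennreal (\<delta> * of_bool (real m * \<delta> < y))" "{..<N}"]
    by (simp add: summableI)
qed

lemma suminf_ennreal_geometric:
  fixes q a :: real
  assumes "0 \<le> q" "q < 1" "0 \<le> a"
  shows "(\<Sum>m. ennreal (a * q ^ m)) = ennreal (a / (1 - q))"
proof -
  have "(\<Sum>m. ennreal (a * q ^ m)) = ennreal (\<Sum>m. a * q ^ m)"
    using assms by (intro suminf_ennreal2 summable_mult summable_geometric) auto
  also have "(\<Sum>m. a * q ^ m) = a / (1 - q)"
    using assms by (simp add: suminf_mult suminf_geometric divide_simps)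
  finally show ?thesis .
qed

text \<open>A union bound over the index \<open>j\<close> combined with the layer-cake formula at mesh \<open>\<delta>\<close>;
  the selection \<open>J\<close> need not be measurable.\<close>

lemma (in finite_measure) nn_integral_pos_part_selected_le:
  fixes Y :: "nat \<Rightarrow> 'a \<Rightarrow> real" and J :: "'a \<Rightarrow> nat"
  assumes [measurable]: "\<And>j. Y j \<in> borel_measurable M"
    and \<delta>: "0 < \<delta>" and q: "0 \<le> q" "q < 1" and a: "0 \<le> a"
    and tail: "\<And>j m. measure M {x \<in> space M. real m * \<delta> < Y j x} \<le> a * q ^ j * q ^ m"
  shows "(\<integral>\<^sup>+x. ennreal (max 0 (Y (J x) x)) \<partial>M) \<le> ennreal (\<delta> * a / (1 - q)\<^sup>2)"
proof -
  let ?layer = "\<lambda>j m x. ennreal (\<delta> * of_bool (real m * \<delta> < Y j x))"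
  have layer: "(\<integral>\<^sup>+x. ?layer j m x \<partial>M) \<le> ennreal (\<delta> * a * q ^ j * q ^ m)" for j m
  proof -
    have "(\<integral>\<^sup>+x. ?layer j m x \<partial>M)
        = (\<integral>\<^sup>+x. ennreal \<delta> * indicator {x \<in> space M. real m * \<delta> < Y j x} x \<partial>M)"
      by (intro nn_integral_cong) (auto simp: indicator_def)
    also have "\<dots> = ennreal (\<delta> * measure M {x \<in> space M. real m * \<delta> < Y j x})"
      using \<delta> by (simp add: nn_integral_cmult_indicator emeasure_eq_measure ennreal_mult)
    also have "\<dots> \<le> ennreal (\<delta> * a * q ^ j * q ^ m)"
      using \<delta> tail[of m j] by (intro ennreal_leI) (simp add: mult.assoc mult_left_mono)
    finally show ?thesis .
  qed
  have "(\<integral>\<^sup>+x. ennreal (max 0 (Y (J x) x)) \<partial>M) \<le> (\<integral>\<^sup>+x. (\<Sum>j. \<Sum>m. ?layer j m x) \<partial>M)"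
  proof (rule nn_integral_mono)
    fix x
    show "ennreal (max 0 (Y (J x) x)) \<le> (\<Sum>j. \<Sum>m. ?layer j m x)"
      using ennreal_pos_part_le_suminf_layers[OF \<delta>, of "Y (J x) x"]
        sum_le_suminf[of "\<lambda>j. \<Sum>m. ?layer j m x" "{J x}"]
      by (simp add: summableI)
  qed
  also have "\<dots> = (\<Sum>j. \<Sum>m. \<integral>\<^sup>+x. ?layer j m x \<partial>M)"
    by (simp add: nn_integral_suminf)
  also have "\<dots> \<le> (\<Sum>j. \<Sum>m. ennreal (\<delta> * a * q ^ j * q ^ m))"
    by (intro suminf_le summableI layer)
  also have "\<dots> = (\<Sum>j. ennreal (\<delta> * a / (1 - q) * q ^ j))"
  proof (rule suminf_cong)
    fix j
    have "(\<Sum>m. ennreal (\<delta> * a * q ^ j * q ^ m)) = ennreal (\<delta> * a * q ^ j / (1 - q))"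
      using q a \<delta> by (intro suminf_ennreal_geometric) auto
    then show "(\<Sum>m. ennreal (\<delta> * a * q ^ j * q ^ m)) = ennreal (\<delta> * a / (1 - q) * q ^ j)"
      by (simp add: field_simps)
  qed
  also have "\<dots> = ennreal (\<delta> * a / (1 - q) / (1 - q))"
    using q a \<delta> by (intro suminf_ennreal_geometric) auto
  also have "\<delta> * a / (1 - q) / (1 - q) = \<delta> * a / (1 - q)\<^sup>2"
    by (simp add: power2_eq_square)
  finally show ?thesis .
qed

lemma integral_le_of_nn_integral_bound:
  fixes u h :: "'a \<Rightarrow> real"
  assumes "integrable M u" and "\<And>x. x \<in> space M \<Longrightarrow> u x \<le> h x" and "\<And>x. 0 \<le> h x"
    and "(\<integral>\<^sup>+x. ennreal (h x) \<partial>M) \<le> ennreal K" and "0 \<le> K"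
  shows "(\<integral>x. u x \<partial>M) \<le> K"
proof -
  have pos: "integrable M (\<lambda>x. max 0 (u x))"
    using assms(1) by auto
  have "(\<integral>x. u x \<partial>M) \<le> (\<integral>x. max 0 (u x) \<partial>M)"
    using assms(1) pos by (intro integral_mono) auto
  moreover have "ennreal (\<integral>x. max 0 (u x) \<partial>M) = (\<integral>\<^sup>+x. ennreal (max 0 (u x)) \<partial>M)"
    by (rule nn_integral_eq_integral[symmetric]) (use pos in auto)
  moreover have "(\<integral>\<^sup>+x. ennreal (max 0 (u x)) \<partial>M) \<le> (\<integral>\<^sup>+x. ennreal (h x) \<partial>M)"
    using assms(2,3) by (intro nn_integral_mono ennreal_leI) auto
  ultimately show ?thesis
    using assms(4,5) by (metis ennreal_le_iff order_trans)
qed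

lemma exp_layer_tail_le_geometric:
  fixes c :: real and n j m :: nat
  assumes "0 < n" "0 \<le> c"
  shows "exp (- 2 * c * real n * (real m / sqrt (real n) + sqrt (real j / real n))\<^sup>2)
    \<le> exp (- 2 * c) ^ j * exp (- 2 * c) ^ m"
proof -
  have "real m / sqrt (real n) + sqrt (real j / real n) = (real m + sqrt (real j)) / sqrt (real n)"
    by (simp add: real_sqrt_divide add_divide_distrib)
  then have "real n * (real m / sqrt (real n) + sqrt (real j / real n))\<^sup>2 = (real m + sqrt (real j))\<^sup>2"
    using assms by (simp add: power_divide)
  also have "\<dots> \<ge> real j + real m"
    by (cases m) (auto simp: power2_eq_square algebra_simps)
  finally have "- 2 * c * real n * (real m / sqrt (real n) + sqrt (real j / real n))\<^sup>2
      \<le> - 2 * c * (real j + real m)"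
    using assms by (simp add: mult_left_mono mult.assoc)
  then show ?thesis
    by (simp add: exp_of_nat_mult[symmetric] exp_add[symmetric] algebra_simps)
qed

lemma measurable_obsX [measurable]: "obsX \<in> borel_measurable obs_space"
  unfolding obsX_def[abs_def] obs_space_def by measurable

lemma measurable_obsY [measurable]: "obsY \<in> borel_measurable obs_space"
  unfolding obsY_def[abs_def] obs_space_def by measurable

lemma measurable_obsD [measurable]: "obsD \<in> measurable obs_space (count_space UNIV)"
  unfolding obsD_def[abs_def] obs_space_def by measurable

lemma measurable_tau [measurable]:
  assumes [measurable]: "e \<in> borel_measurable borel"
  shows "tau e \<in> borel_measurable obs_space"
  unfolding tau_def[abs_def] by measurable

lemma measurable_sample_component [measurable]:
  "i < n \<Longrightarrow> (\<lambda>S. S i) \<in> measurable (sample_space n) obs_space"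
  unfolding sample_space_def by (intro measurable_component_singleton) auto

lemma abs_tau_le:
  assumes "\<kappa> \<le> e (obsX w)" "e (obsX w) \<le> 1 - \<kappa>" "0 < \<kappa>" "\<bar>obsY w\<bar> \<le> M / 2"
  shows "\<bar>tau e w\<bar> \<le> M / \<kappa>"
proof -
  have "\<bar>obsY w\<bar> / e (obsX w) \<le> (M / 2) / \<kappa>"
    using assms by (intro frac_le) auto
  moreover have "\<bar>obsY w\<bar> / (1 - e (obsX w)) \<le> (M / 2) / \<kappa>"
    using assms by (intro frac_le) auto
  moreover have "(M / 2) / \<kappa> \<le> M / \<kappa>"
    using assms by (intro divide_right_mono) (auto dest: order_trans[OF abs_ge_zero])
  ultimately show ?thesis
    using assms by (cases "obsD w") (auto simp: tau_def abs_divide)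
qed

lemma in_PMkD:
  assumes "in_PMk M \<kappa> P e"
  shows "prob_space P" "sets P = sets obs_space" "e \<in> borel_measurable borel"
    "\<kappa> \<le> e x" "e x \<le> 1 - \<kappa>" "AE w in P. \<bar>obsY w\<bar> \<le> M / 2"
  using assms unfolding in_PMk_def propensity_def by (auto elim!: AE_mp)

lemma AE_abs_welfare_integrand_le:
  fixes P :: "'d::finite obs measure"
  assumes "in_PMk M \<kappa> P e" "0 < \<kappa>"
  shows "AE w in P. \<bar>tau e w * indicator G (obsX w)\<bar> \<le> M / \<kappa>"
  using in_PMkD(6)[OF assms(1)]
proof (rule AE_mp, intro AE_I2 impI)
  fix w :: "'d obs" assume "\<bar>obsY w\<bar> \<le> M / 2"
  then have "\<bar>tau e w\<bar> \<le> M / \<kappa>"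
    using in_PMkD(4,5)[OF assms(1)] assms(2) by (intro abs_tau_le)
  then show "\<bar>tau e w * indicator G (obsX w)\<bar> \<le> M / \<kappa>"
    by (auto simp: indicator_def)
qed

lemma integrable_welfare_integrand:
  fixes P :: "'d::finite obs measure"
  assumes "in_PMk M \<kappa> P e" "0 < \<kappa>" "G \<in> sets borel"
  shows "integrable P (\<lambda>w. tau e w * indicator G (obsX w))"
proof -
  interpret prob_space P by (rule in_PMkD(1)[OF assms(1)])
  note [measurable] = in_PMkD(3)[OF assms(1)] assms(3)
  have "(\<lambda>w. tau e w * indicator G (obsX w)) \<in> borel_measurable P"
    unfolding measurable_cong_sets[OF in_PMkD(2)[OF assms(1)] refl] by measurable
  then show ?thesis
    using AE_abs_welfare_integrand_le[OF assms(1,2)] by (intro integrable_const_bound) auto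
qed

lemma abs_welfare_le:
  fixes P :: "'d::finite obs measure"
  assumes "in_PMk M \<kappa> P e" "0 < \<kappa>" "G \<in> sets borel"
  shows "\<bar>welfare P e G\<bar> \<le> M / \<kappa>"
proof -
  interpret prob_space P by (rule in_PMkD(1)[OF assms(1)])
  have "\<bar>welfare P e G\<bar> \<le> (\<integral>w. \<bar>tau e w * indicator G (obsX w)\<bar> \<partial>P)"
    unfolding welfare_def by (rule integral_abs_bound)
  also have "\<dots> \<le> M / \<kappa>"
    using AE_abs_welfare_integrand_le[OF assms(1,2)] integrable_welfare_integrand[OF assms]
    by (intro integral_le_const) auto
  finally show ?thesis .
qed

lemma prob_space_sample_law: "prob_space P \<Longrightarrow> prob_space (sample_law P n)"
  unfolding sample_law_def by (intro prob_space_PiM) auto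

lemma sets_sample_law: "sets P = sets obs_space \<Longrightarrow> sets (sample_law P n) = sets (sample_space n)"
  unfolding sample_law_def sample_space_def by (intro sets_PiM_cong) auto

lemma integral_sample_component:
  fixes f :: "'d::finite obs \<Rightarrow> real"
  assumes "prob_space P" "i < n" "f \<in> borel_measurable P" "integrable P f"
  shows "integrable (sample_law P n) (\<lambda>S. f (S i))"
    and "(\<integral>S. f (S i) \<partial>sample_law P n) = (\<integral>w. f w \<partial>P)"
proof -
  have distr: "distr (sample_law P n) P (\<lambda>S. S i) = P"
    unfolding sample_law_def using assms by (intro distr_PiM_component) auto
  have meas: "(\<lambda>S. S i) \<in> measurable (sample_law P n) P"
    unfolding sample_law_def using assms by (intro measurable_component_singleton) auto
  show "integrable (sample_law P n) (\<lambda>S. f (S i))"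
    using integrable_distr_eq[OF meas assms(3)] assms(4) distr by simp
  show "(\<integral>S. f (S i) \<partial>sample_law P n) = (\<integral>w. f w \<partial>P)"
    using integral_distr[OF meas assms(3)] distr by simp
qed

lemma emp_welfare_unbiased:
  fixes P :: "'d::finite obs measure"
  assumes "in_PMk M \<kappa> P e" "0 < \<kappa>" "G \<in> sets borel" "1 \<le> n"
  shows "integrable (sample_law P n) (\<lambda>S. emp_welfare e n S G)"
    and "(\<integral>S. emp_welfare e n S G \<partial>sample_law P n) = welfare P e G"
proof -
  define f where "f w = tau e w * indicator G (obsX w)" for w
  note [measurable] = in_PMkD(3)[OF assms(1)] assms(3)
  have "f \<in> borel_measurable P"
    unfolding f_def[abs_def] measurable_cong_sets[OF in_PMkD(2)[OF assms(1)] refl] by measurable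
  note component = integral_sample_component[OF in_PMkD(1)[OF assms(1)] _ this
      integrable_welfare_integrand[OF assms(1-3), folded f_def]]
  have emp: "emp_welfare e n S G = (1 / real n) * (\<Sum>i<n. f (S i))" for S
    unfolding emp_welfare_def f_def ..
  show "integrable (sample_law P n) (\<lambda>S. emp_welfare e n S G)"
    unfolding emp by (intro integrable_mult_right integrable_sum) (use component(1) in auto)
  have "(\<integral>S. emp_welfare e n S G \<partial>sample_law P n) = (1 / real n) * (\<Sum>i<n. \<integral>S. f (S i) \<partial>sample_law P n)"
    unfolding emp using component(1) by (simp add: Bochner_Integration.integral_sum)
  also have "\<dots> = (1 / real n) * (\<Sum>i<n. welfare P e G)"
    using component(2) by (simp add: welfare_def f_def)
  also have "\<dots> = welfare P e G"
    using assms(4) by simp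
  finally show "(\<integral>S. emp_welfare e n S G \<partial>sample_law P n) = welfare P e G" .
qed

lemma measurable_emp_welfare_random_set [measurable]:
  assumes [measurable]: "e \<in> borel_measurable borel"
    and [measurable]: "Measurable.pred (sample_space n \<Otimes>\<^sub>M borel) (\<lambda>(S, x). x \<in> g S)"
  shows "(\<lambda>S. emp_welfare e n S (g S)) \<in> borel_measurable (sample_space n)"
  unfolding emp_welfare_def by measurable

lemma measurable_welfare_random_set:
  assumes [measurable]: "e \<in> borel_measurable borel"
    and [measurable]: "Measurable.pred (sample_space n \<Otimes>\<^sub>M borel) (\<lambda>(S, x). x \<in> g S)"
    and "prob_space P" "sets P = sets obs_space"
  shows "(\<lambda>S. welfare P e (g S)) \<in> borel_measurable (sample_space n)"
proof -
  interpret prob_space P by fact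
  have "(\<lambda>(S, w). tau e w * indicator (g S) (obsX w)) \<in> borel_measurable (sample_space n \<Otimes>\<^sub>M P)"
    unfolding measurable_cong_sets[OF sets_pair_measure_cong[OF refl assms(4)] refl] by measurable
  then show ?thesis
    unfolding welfare_def by (rule borel_measurable_lebesgue_integral)
qed

lemma nn_integral_pos_part_penalized_excess_le:
  fixes P :: "'d::finite obs measure" and I :: "nat set"
    and C :: "nat \<Rightarrow> (nat \<Rightarrow> 'd obs) \<Rightarrow> real"
    and ghat :: "nat \<Rightarrow> (nat \<Rightarrow> 'd obs) \<Rightarrow> (real ^ 'd) set"
    and khat :: "(nat \<Rightarrow> 'd obs) \<Rightarrow> nat"
  assumes P: "prob_space P" "sets P = sets obs_space"
    and e [measurable]: "e \<in> borel_measurable borel"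
    and n: "1 \<le> n" and I_pos: "\<And>j. j \<in> I \<Longrightarrow> 1 \<le> j" and khat: "\<And>S. khat S \<in> I"
    and meas_C: "\<And>j. j \<in> I \<Longrightarrow> C j \<in> borel_measurable (sample_space n)"
    and meas_ghat: "\<And>j. j \<in> I \<Longrightarrow> Measurable.pred (sample_space n \<Otimes>\<^sub>M borel) (\<lambda>(S, x). x \<in> ghat j S)"
    and c: "0 < c0" "0 \<le> c1"
    and tail: "\<And>j \<epsilon>. j \<in> I \<Longrightarrow> 0 < \<epsilon> \<Longrightarrow>
      measure (sample_law P n) {S \<in> space (sample_law P n).
        emp_welfare e n S (ghat j S) - welfare P e (ghat j S) - C j S > \<epsilon>}
      \<le> c1 * exp (- 2 * c0 * real n * \<epsilon>\<^sup>2)"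
  shows "(\<integral>\<^sup>+S. ennreal (max 0 (emp_welfare e n S (ghat (khat S) S) - welfare P e (ghat (khat S) S)
      - C (khat S) S - sqrt (real (khat S) / real n))) \<partial>sample_law P n)
    \<le> ennreal (c1 / (1 - exp (- 2 * c0))\<^sup>2 / sqrt (real n))"
proof -
  interpret L: prob_space "sample_law P n"
    by (rule prob_space_sample_law[OF P(1)])
  note sets_L = measurable_cong_sets[OF sets_sample_law[OF P(2)] refl]
  define q where "q = exp (- 2 * c0)"
  define \<delta> where "\<delta> = 1 / sqrt (real n)"
  define Y where "Y j S = (if j \<in> I then emp_welfare e n S (ghat j S) - welfare P e (ghat j S)
    - C j S - sqrt (real j / real n) else 0)" for j S
  have \<delta>: "0 < \<delta>" and q: "0 \<le> q" "q < 1"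
    using n c by (auto simp: \<delta>_def q_def)
  have "Y j \<in> borel_measurable (sample_law P n)" for j
  proof (cases "j \<in> I")
    case True
    note [measurable] = meas_C[OF True] meas_ghat[OF True] measurable_welfare_random_set[OF e _ P]
    show ?thesis
      unfolding sets_L Y_def[abs_def] using True by measurable
  next
    case False
    then show ?thesis
      by (simp add: Y_def[abs_def])
  qed
  moreover have "L.prob {S \<in> space (sample_law P n). real m * \<delta> < Y j S} \<le> c1 * q ^ j * q ^ m"
    for j m
  proof (cases "j \<in> I")
    case True
    define \<epsilon> where "\<epsilon> = real m / sqrt (real n) + sqrt (real j / real n)"
    have "0 < \<epsilon>"
      using I_pos[OF True] n by (auto simp: \<epsilon>_def intro: add_nonneg_pos)
    have "{S \<in> space (sample_law P n). real m * \<delta> < Y j S} = {S \<in> space (sample_law P n).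
        emp_welfare e n S (ghat j S) - welfare P e (ghat j S) - C j S > \<epsilon>}"
      using True by (auto simp: Y_def \<epsilon>_def \<delta>_def)
    also have "L.prob \<dots> \<le> c1 * exp (- 2 * c0 * real n * \<epsilon>\<^sup>2)"
      by (rule tail[OF True \<open>0 < \<epsilon>\<close>])
    also have "\<dots> \<le> c1 * q ^ j * q ^ m"
      using exp_layer_tail_le_geometric[of n c0 m j] n c
      by (simp add: \<epsilon>_def q_def mult.assoc mult_left_mono)
    finally show ?thesis .
  next
    case False
    then have "{S \<in> space (sample_law P n). real m * \<delta> < Y j S} = {}"
      using \<delta> by (auto simp: Y_def not_less)
    then show ?thesis
      using c q by (simp only: measure_empty) simp
  qed
  ultimately have "(\<integral>\<^sup>+S. ennreal (max 0 (Y (khat S) S)) \<partial>sample_law P n) \<le> ennreal (\<delta> * c1 / (1 - q)\<^sup>2)"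
    using \<delta> q c by (intro L.nn_integral_pos_part_selected_le) auto
  then show ?thesis
    using khat by (simp add: Y_def \<delta>_def q_def mult.commute)
qed

lemma integrable_welfare_random_index:
  fixes P :: "'d::finite obs measure" and I :: "nat set"
    and ghat :: "nat \<Rightarrow> (nat \<Rightarrow> 'd obs) \<Rightarrow> (real ^ 'd) set"
    and khat :: "(nat \<Rightarrow> 'd obs) \<Rightarrow> nat"
  assumes PM: "in_PMk M \<kappa> P e" and \<kappa>: "0 < \<kappa>"
    and ghat_borel: "\<And>j S. j \<in> I \<Longrightarrow> ghat j S \<in> sets borel"
    and meas_ghat: "\<And>j. j \<in> I \<Longrightarrow> Measurable.pred (sample_space n \<Otimes>\<^sub>M borel) (\<lambda>(S, x). x \<in> ghat j S)"
    and meas_khat: "khat \<in> measurable (sample_space n) (count_space UNIV)"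
    and khat: "\<And>S. khat S \<in> I"
  shows "integrable (sample_law P n) (\<lambda>S. welfare P e (ghat (khat S) S))"
proof -
  note P = in_PMkD(1,2)[OF PM]
  interpret L: prob_space "sample_law P n"
    by (rule prob_space_sample_law[OF P(1)])
  have "(\<lambda>S. welfare P e (ghat j S)) \<in> borel_measurable (sample_space n)" if "j \<in> I" for j
    using in_PMkD(3)[OF PM] meas_ghat[OF that] P by (rule measurable_welfare_random_set)
  moreover have "khat \<in> measurable (sample_space n) (count_space I)"
    using meas_khat khat by (auto simp: measurable_count_space_eq2_countable)
  ultimately have "(\<lambda>S. welfare P e (ghat (khat S) S)) \<in> borel_measurable (sample_law P n)"
    unfolding measurable_cong_sets[OF sets_sample_law[OF P(2)] refl]
    by (rule measurable_compose_countable'[OF _ _ countableI_type])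
  moreover have "\<bar>welfare P e (ghat (khat S) S)\<bar> \<le> M / \<kappa>" for S
    using abs_welfare_le[OF PM \<kappa> ghat_borel[OF khat]] .
  ultimately show ?thesis
    by (intro L.integrable_const_bound[where B = "M / \<kappa>"]) auto
qed

lemma pwm_regret_le:
  fixes P :: "'d::finite obs measure" and I :: "nat set"
    and \<G> :: "(real ^ 'd) set set" and Gk :: "nat \<Rightarrow> (real ^ 'd) set set"
    and C :: "nat \<Rightarrow> (nat \<Rightarrow> 'd obs) \<Rightarrow> real"
    and ghat :: "nat \<Rightarrow> (nat \<Rightarrow> 'd obs) \<Rightarrow> (real ^ 'd) set"
    and khat :: "(nat \<Rightarrow> 'd obs) \<Rightarrow> nat"
  assumes PM: "in_PMk M \<kappa> P e" and \<kappa>: "0 < \<kappa>" and n: "1 \<le> n"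
    and I_pos: "\<And>j. j \<in> I \<Longrightarrow> 1 \<le> j"
    and G_meas: "\<G> \<subseteq> sets borel" and Gk_sub: "\<And>j. j \<in> I \<Longrightarrow> Gk j \<subseteq> \<G>"
    and ghat_max: "\<And>j S. j \<in> I \<Longrightarrow> ghat j S \<in> Gk j \<and>
      (\<forall>G \<in> Gk j. emp_welfare e n S G \<le> emp_welfare e n S (ghat j S))"
    and khat_max: "\<And>S. khat S \<in> I \<and>
      (\<forall>j \<in> I. emp_welfare e n S (ghat j S) - C j S - sqrt (real j / real n)
        \<le> emp_welfare e n S (ghat (khat S) S) - C (khat S) S - sqrt (real (khat S) / real n))"
    and meas_C: "\<And>j. j \<in> I \<Longrightarrow> C j \<in> borel_measurable (sample_space n)"
    and meas_ghat: "\<And>j. j \<in> I \<Longrightarrow> Measurable.pred (sample_space n \<Otimes>\<^sub>M borel) (\<lambda>(S, x). x \<in> ghat j S)"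
    and meas_khat: "khat \<in> measurable (sample_space n) (count_space UNIV)"
    and c: "0 < c0" "0 \<le> c1"
    and tail: "\<And>j \<epsilon>. j \<in> I \<Longrightarrow> 0 < \<epsilon> \<Longrightarrow>
      measure (sample_law P n) {S \<in> space (sample_law P n).
        emp_welfare e n S (ghat j S) - welfare P e (ghat j S) - C j S > \<epsilon>}
      \<le> c1 * exp (- 2 * c0 * real n * \<epsilon>\<^sup>2)"
    and k: "k \<in> I" and C_int: "integrable (sample_law P n) (C k)"
  shows "(\<integral>S. Wstar P e \<G> - welfare P e (ghat (khat S) S) \<partial>sample_law P n)
    \<le> (\<integral>S. C k S \<partial>sample_law P n) + (Wstar P e \<G> - Wstar P e (Gk k)) + sqrt (real k / real n)
      + c1 / (1 - exp (- 2 * c0))\<^sup>2 / sqrt (real n)"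
proof -
  note P = in_PMkD(1,2)[OF PM] and e = in_PMkD(3)[OF PM]
  interpret L: prob_space "sample_law P n"
    by (rule prob_space_sample_law[OF P(1)])
  define K where "K = c1 / (1 - exp (- 2 * c0))\<^sup>2 / sqrt (real n)"
  define W where "W S = welfare P e (ghat (khat S) S)" for S
  define excess where "excess S = emp_welfare e n S (ghat (khat S) S) - W S
    - C (khat S) S - sqrt (real (khat S) / real n)" for S
  have ghat_borel: "ghat j S \<in> sets borel" if "j \<in> I" for j S
    using ghat_max[OF that] Gk_sub[OF that] G_meas by blast
  have W_int: "integrable (sample_law P n) W"
    unfolding W_def using khat_max
    by (intro integrable_welfare_random_index[OF PM \<kappa> ghat_borel meas_ghat meas_khat]) blast+
  have excess_bound: "(\<integral>\<^sup>+S. ennreal (max 0 (excess S)) \<partial>sample_law P n) \<le> ennreal K"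
    unfolding excess_def W_def K_def using khat_max
    by (intro nn_integral_pos_part_penalized_excess_le[OF P e n I_pos _ meas_C meas_ghat c tail]) auto
  have "welfare P e G \<le> (\<integral>S. C k S \<partial>sample_law P n) + sqrt (real k / real n) + K
      + Wstar P e \<G> - (\<integral>S. Wstar P e \<G> - W S \<partial>sample_law P n)" if G: "G \<in> Gk k" for G
  proof -
    note emp = emp_welfare_unbiased[OF PM \<kappa> _ n, of G]
    have G_borel: "G \<in> sets borel"
      using G Gk_sub[OF k] G_meas by blast
    have "emp_welfare e n S G - C k S - sqrt (real k / real n)
        \<le> emp_welfare e n S (ghat (khat S) S) - C (khat S) S - sqrt (real (khat S) / real n)" for S
      using ghat_max[OF k, of S] khat_max[of S] G k by fastforce
    then have "(Wstar P e \<G> - W S) - (Wstar P e \<G> - emp_welfare e n S G + C k S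
        + sqrt (real k / real n)) \<le> max 0 (excess S)" for S
      unfolding excess_def by (smt (verit))
    moreover have "0 \<le> K"
      using c(2) by (auto simp: K_def intro!: divide_nonneg_nonneg)
    ultimately have "(\<integral>S. (Wstar P e \<G> - W S) - (Wstar P e \<G> - emp_welfare e n S G + C k S
        + sqrt (real k / real n)) \<partial>sample_law P n) \<le> K"
      using W_int emp(1)[OF G_borel] C_int
      by (intro integral_le_of_nn_integral_bound[OF _ _ _ excess_bound]) auto
    then show ?thesis
      using W_int emp[OF G_borel] C_int by (simp add: Bochner_Integration.integral_diff L.prob_space)
  qed
  then have "Wstar P e (Gk k) \<le> (\<integral>S. C k S \<partial>sample_law P n) + sqrt (real k / real n) + K
      + Wstar P e \<G> - (\<integral>S. Wstar P e \<G> - W S \<partial>sample_law P n)"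
    unfolding Wstar_def using ghat_max[OF k] by (intro cSUP_least) auto
  then show ?thesis
    unfolding W_def K_def by linarith
qed

theorem theorem3p1:
  fixes M \<kappa> :: real
    and Kmax :: enat
    and \<G> :: "(real ^ 'd::finite) set set"
    and Gk :: "nat \<Rightarrow> (real ^ 'd) set set"
    and C :: "(real ^ 'd \<Rightarrow> real) \<Rightarrow> nat \<Rightarrow> nat \<Rightarrow> (nat \<Rightarrow> 'd obs) \<Rightarrow> real"
    and ghat :: "(real ^ 'd \<Rightarrow> real) \<Rightarrow> nat \<Rightarrow> nat \<Rightarrow> (nat \<Rightarrow> 'd obs) \<Rightarrow> (real ^ 'd) set"
    and khat :: "(real ^ 'd \<Rightarrow> real) \<Rightarrow> nat \<Rightarrow> (nat \<Rightarrow> 'd obs) \<Rightarrow> nat"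
  defines "I \<equiv> {k::nat. 1 \<le> k \<and> enat k \<le> Kmax}"
  assumes M_pos: "0 < M"
    and kappa: "0 < \<kappa>" "\<kappa> < 1/2"
    and Kmax: "1 \<le> Kmax"
    and G_meas: "\<G> \<subseteq> sets borel"
    and Gk_sub: "\<And>k. k \<in> I \<Longrightarrow> Gk k \<subseteq> \<G>"
    and Gk_VC: "\<And>k. k \<in> I \<Longrightarrow> vc_dim (Gk k) < \<infinity>"
    and ghat_max: "\<And>e n k S. e \<in> borel_measurable borel \<Longrightarrow> (\<forall>x. \<kappa> \<le> e x \<and> e x \<le> 1 - \<kappa>) \<Longrightarrow> k \<in> I \<Longrightarrow>
        ghat e n k S \<in> Gk k \<and>
        (\<forall>G \<in> Gk k. emp_welfare e n S G \<le> emp_welfare e n S (ghat e n k S))"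
    and khat_max: "\<And>e n S. e \<in> borel_measurable borel \<Longrightarrow> (\<forall>x. \<kappa> \<le> e x \<and> e x \<le> 1 - \<kappa>) \<Longrightarrow>
        khat e n S \<in> I \<and>
        (\<forall>k \<in> I. emp_welfare e n S (ghat e n k S) - C e n k S - sqrt (real k / real n)
              \<le> emp_welfare e n S (ghat e n (khat e n S) S) - C e n (khat e n S) S
                 - sqrt (real (khat e n S) / real n))"
    and meas_C: "\<And>e n k. e \<in> borel_measurable borel \<Longrightarrow> (\<forall>x. \<kappa> \<le> e x \<and> e x \<le> 1 - \<kappa>) \<Longrightarrow>
        k \<in> I \<Longrightarrow> C e n k \<in> borel_measurable (sample_space n)"
    and meas_ghat: "\<And>e n k. e \<in> borel_measurable borel \<Longrightarrow> (\<forall>x. \<kappa> \<le> e x \<and> e x \<le> 1 - \<kappa>) \<Longrightarrow>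
        k \<in> I \<Longrightarrow> (\<lambda>(S, x). x \<in> ghat e n k S)
          \<in> measurable (sample_space n \<Otimes>\<^sub>M borel) (count_space UNIV)"
    and meas_khat: "\<And>e n. e \<in> borel_measurable borel \<Longrightarrow> (\<forall>x. \<kappa> \<le> e x \<and> e x \<le> 1 - \<kappa>) \<Longrightarrow>
        khat e n \<in> measurable (sample_space n) (count_space UNIV)"
    and tail: "\<exists>c0 c1. 0 < c0 \<and> 0 < c1 \<and>
        (\<forall>n \<ge> 1. \<forall>k \<in> I. \<forall>\<epsilon> > 0. \<forall>P e. in_PMk M \<kappa> P e \<longrightarrow>
           measure (sample_law P n)
             {S \<in> space (sample_law P n).
                emp_welfare e n S (ghat e n k S) - welfare P e (ghat e n k S) - C e n k S > \<epsilon>}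
           \<le> c1 * exp (- 2 * c0 * real n * \<epsilon>\<^sup>2))"
  shows "\<exists>\<Delta> c0. 0 < \<Delta> \<and> 0 < c0 \<and>
     (\<forall>n \<ge> 1. \<forall>P e. in_PMk M \<kappa> P e \<longrightarrow>
        (\<forall>k \<in> I. integrable (sample_law P n) (C e n k) \<longrightarrow>
           (\<integral>S. Wstar P e \<G> - welfare P e (ghat e n (khat e n S) S) \<partial>sample_law P n)
           \<le> (\<integral>S. C e n k S \<partial>sample_law P n) + (Wstar P e \<G> - Wstar P e (Gk k))
              + sqrt (real k / real n)
              + sqrt (ln (\<Delta> * exp 1) / (2 * c0 * real n))))"
  \<comment> \<open>The finite VC dimensions enter only through the tail condition, so \<open>Gk_VC\<close> is unused.\<close>
proof -
  obtain c0 c1 where c: "0 < c0" "0 < c1" and tail_nk: "\<forall>n \<ge> 1. \<forall>k \<in> I. \<forall>\<epsilon> > 0. \<forall>P e.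
      in_PMk M \<kappa> P e \<longrightarrow> measure (sample_law P n) {S \<in> space (sample_law P n).
        emp_welfare e n S (ghat e n k S) - welfare P e (ghat e n k S) - C e n k S > \<epsilon>}
      \<le> c1 * exp (- 2 * c0 * real n * \<epsilon>\<^sup>2)"
    using tail by blast
  define K where "K = c1 / (1 - exp (- 2 * c0))\<^sup>2"
  have "0 < K"
    using c by (simp add: K_def)
  then have rate: "sqrt (ln (1 * exp 1) / (2 * (1 / (2 * K\<^sup>2)) * real n)) = K / sqrt (real n)" for n
    by (simp add: real_sqrt_divide)
  have I_pos: "\<And>j. j \<in> I \<Longrightarrow> 1 \<le> j"
    by (simp add: I_def)
  have regret: "(\<integral>S. Wstar P e \<G> - welfare P e (ghat e n (khat e n S) S) \<partial>sample_law P n)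
      \<le> (\<integral>S. C e n k S \<partial>sample_law P n) + (Wstar P e \<G> - Wstar P e (Gk k))
        + sqrt (real k / real n) + K / sqrt (real n)"
    if "1 \<le> n" "in_PMk M \<kappa> P e" "k \<in> I" "integrable (sample_law P n) (C e n k)" for n P e k
  proof -
    note e = in_PMkD(3)[OF that(2)]
    have e_bounds: "\<forall>x. \<kappa> \<le> e x \<and> e x \<le> 1 - \<kappa>"
      using in_PMkD(4,5)[OF that(2)] by blast
    show ?thesis
      unfolding K_def
      by (rule pwm_regret_le[OF that(2) kappa(1) that(1) I_pos G_meas Gk_sub
            ghat_max[OF e e_bounds] khat_max[OF e e_bounds] meas_C[OF e e_bounds]
            meas_ghat[OF e e_bounds] meas_khat[OF e e_bounds] _ _ _ that(3,4)])
        (use c tail_nk that in auto)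
  qed
  show ?thesis
    by (rule exI[of _ 1], rule exI[of _ "1 / (2 * K\<^sup>2)"], unfold rate) (use regret \<open>0 < K\<close> in auto)
qed

end
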